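(* There is an absolute constant $c>0$ such that for every instance $I$ of continuous BGT (with $n\ge2$ and $h_{\max}>h_{\min}$), the schedule produced by Algorithm 2 satisfies $\mathrm{MH}\le c\cdot\log_2\lceil h_{\max}/h_{\min}\rceil\cdot\mathrm{OPT}(I)$. Algorithm 2: let $s=\lfloor\log_2(h_{\max}/h_{\min})\rfloor+1$ and, for $i=1,\dots,s$, $V_i=\{v_j\in V: 2^{i-1}h_{\min}\le h_j<2^i h_{\min}\}$ (with $v_j$ of rate $h_j=2^s h_{\min}$ impossible, so the $V_i$ partition $V$). For each nonempty $V_i$ compute a minimum spanning tree $T_i$ of $V_i$ and a directed closed Euler tour $C_i$ of $T_i$ (a cyclic walk traversing each edge of $T_i$ twice), and mark an arbitrary point of $C_i$ as its "last visited point". The robot starts at $v_1$ and repeats forever: for $i=1,\dots,s$ with $V_i\ne\emptyset$: travel directly to the last visited point of $C_i$; then, if $|V_i|\ge2$, walk along $C_i$ in the tour direction from that point, stopping at the first tour vertex at which the distance covered along $C_i$ in this phase is at least $D$, and make that vertex the new last visited point of $C_i$. Bamboos are cut whenever the robot is at their point.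
   Context: Continuous BGT: bamboos at points $V=\{v_1,\dots,v_n\}$, growth rates $h_1\ge\dots\ge h_n>0$, initial heights $0$; symmetric travel times $t_{i,j}>0$ ($i\ne j$) satisfying the triangle inequality. The robot starts at $v_1$ at time $0$, moving from $v_i$ to $v_j$ takes time $t_{i,j}$, and the bamboo at a point is cut instantaneously to $0$ whenever the robot is there. Height of $b_i$ at time $t$ = $h_i$ times time since its last cut (or since $0$). $\mathrm{MH}$ = supremum of all heights over all times; $\mathrm{OPT}(I)$ = infimum of $\mathrm{MH}$ over all robot walks. $h_{\max}=h_1$, $h_{\min}=h_n$, $D=\max_{i,j}t_{i,j}$. *)

theory Defs
  imports "HOL-Analysis.Analysis"
begin

text \<open>Points are indexed \<open>0,\<dots>,n-1\<close> (point \<open>i\<close> is the paper's \<open>v_{i+1}\<close>),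
  growth rates \<open>h i\<close>, travel times \<open>t i j\<close> (only used for \<open>i \<noteq> j\<close>).\<close>

definition bgt_instance :: "nat \<Rightarrow> (nat \<Rightarrow> real) \<Rightarrow> (nat \<Rightarrow> nat \<Rightarrow> real) \<Rightarrow> bool" where
  "bgt_instance n h t \<longleftrightarrow>
     n \<ge> 1 \<and>
     (\<forall>i<n. h i > 0) \<and>
     (\<forall>i j. i \<le> j \<and> j < n \<longrightarrow> h j \<le> h i) \<and>
     (\<forall>i<n. \<forall>j<n. i \<noteq> j \<longrightarrow> t i j > 0 \<and> t i j = t j i) \<and>
     (\<forall>i<n. \<forall>j<n. \<forall>k<n. i \<noteq> j \<and> j \<noteq> k \<and> i \<noteq> k \<longrightarrow> t i k \<le> t i j + t j k)"

definition hmax :: "nat \<Rightarrow> (nat \<Rightarrow> real) \<Rightarrow> real" where "hmax n h = h 0"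
definition hmin :: "nat \<Rightarrow> (nat \<Rightarrow> real) \<Rightarrow> real" where "hmin n h = h (n - 1)"
definition Dmax :: "nat \<Rightarrow> (nat \<Rightarrow> nat \<Rightarrow> real) \<Rightarrow> real" where
  "Dmax n t = Max {t i j | i j. i < n \<and> j < n \<and> i \<noteq> j}"

definition tt :: "(nat \<Rightarrow> nat \<Rightarrow> real) \<Rightarrow> nat \<Rightarrow> nat \<Rightarrow> real" where
  "tt t a b = (if a = b then 0 else t a b)"

text \<open>A walk is the sequence of points \<open>w 0, w 1, \<dots>\<close> visited; \<open>walk_time t w k\<close> is the
  time at which the robot is at \<open>w k\<close>.\<close>
definition walk_time :: "(nat \<Rightarrow> nat \<Rightarrow> real) \<Rightarrow> (nat \<Rightarrow> nat) \<Rightarrow> nat \<Rightarrow> real" where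
  "walk_time t w k = (\<Sum>j<k. tt t (w j) (w (Suc j)))"

definition robot_walk :: "nat \<Rightarrow> (nat \<Rightarrow> nat \<Rightarrow> real) \<Rightarrow> (nat \<Rightarrow> nat) \<Rightarrow> bool" where
  "robot_walk n t w \<longleftrightarrow> w 0 = 0 \<and> (\<forall>k. w k < n) \<and> (\<forall>\<tau>. \<exists>k. walk_time t w k > \<tau>)"

definition last_cut :: "(nat \<Rightarrow> nat) \<Rightarrow> (nat \<Rightarrow> real) \<Rightarrow> nat \<Rightarrow> real \<Rightarrow> real" where
  "last_cut w T i \<tau> = Sup ({0} \<union> {T k | k. w k = i \<and> T k \<le> \<tau>})"

definition height :: "(nat \<Rightarrow> real) \<Rightarrow> (nat \<Rightarrow> nat) \<Rightarrow> (nat \<Rightarrow> real) \<Rightarrow> nat \<Rightarrow> real \<Rightarrow> real" where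
  "height h w T i \<tau> = h i * (\<tau> - last_cut w T i \<tau>)"

definition MH :: "nat \<Rightarrow> (nat \<Rightarrow> real) \<Rightarrow> (nat \<Rightarrow> nat) \<Rightarrow> (nat \<Rightarrow> real) \<Rightarrow> ereal" where
  "MH n h w T = (SUP i\<in>{..<n}. SUP \<tau>\<in>{0..}. ereal (height h w T i \<tau>))"

definition OPT :: "nat \<Rightarrow> (nat \<Rightarrow> real) \<Rightarrow> (nat \<Rightarrow> nat \<Rightarrow> real) \<Rightarrow> ereal" where
  "OPT n h t = (INF w\<in>{w. robot_walk n t w}. MH n h w (walk_time t w))"

definition num_classes :: "nat \<Rightarrow> (nat \<Rightarrow> real) \<Rightarrow> nat" where
  "num_classes n h = nat \<lfloor>log 2 (hmax n h / hmin n h)\<rfloor> + 1"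

definition cls :: "nat \<Rightarrow> (nat \<Rightarrow> real) \<Rightarrow> nat \<Rightarrow> nat set" where
  "cls n h i = {j. j < n \<and> 2 ^ (i - 1) * hmin n h \<le> h j \<and> h j < 2 ^ i * hmin n h}"

text \<open>Undirected edges are stored as pairs \<open>(a,b)\<close> with \<open>a < b\<close>.\<close>
definition adj :: "(nat \<times> nat) set \<Rightarrow> nat \<Rightarrow> nat \<Rightarrow> bool" where
  "adj E a b \<longleftrightarrow> (a, b) \<in> E \<or> (b, a) \<in> E"

definition spanning_tree :: "nat set \<Rightarrow> (nat \<times> nat) set \<Rightarrow> bool" where
  "spanning_tree V E \<longleftrightarrow> finite V \<and>
     E \<subseteq> {(a, b). a \<in> V \<and> b \<in> V \<and> a < b} \<and>
     (\<forall>a\<in>V. \<forall>b\<in>V. (a, b) \<in> {(x, y). adj E x y}\<^sup>*) \<and>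
     card E + 1 = card V"

definition tree_weight :: "(nat \<Rightarrow> nat \<Rightarrow> real) \<Rightarrow> (nat \<times> nat) set \<Rightarrow> real" where
  "tree_weight t E = (\<Sum>(a, b)\<in>E. t a b)"

definition min_spanning_tree :: "(nat \<Rightarrow> nat \<Rightarrow> real) \<Rightarrow> nat set \<Rightarrow> (nat \<times> nat) set \<Rightarrow> bool" where
  "min_spanning_tree t V E \<longleftrightarrow> spanning_tree V E \<and>
     (\<forall>E'. spanning_tree V E' \<longrightarrow> tree_weight t E \<le> tree_weight t E')"

text \<open>A closed Euler tour of the tree (each edge traversed twice), as a cyclic list of vertices:
  the tour goes \<open>c!0 \<rightarrow> c!1 \<rightarrow> \<dots> \<rightarrow> c!(m-1) \<rightarrow> c!0\<close>.\<close>
definition euler_tour :: "(nat \<times> nat) set \<Rightarrow> nat list \<Rightarrow> bool" where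
  "euler_tour E c \<longleftrightarrow> length c = 2 * card E \<and>
     (\<forall>k<length c. adj E (c ! k) (c ! ((k + 1) mod length c))) \<and>
     (\<forall>e\<in>E. card {k. k < length c \<and> {c ! k, c ! ((k + 1) mod length c)} = {fst e, snd e}} = 2)"

text \<open>Admissible choices for Algorithm 2: a tour \<open>C i\<close> for each nonempty class (the one-point
  list for a singleton class) and an initial marked position \<open>p0 i\<close> on it.\<close>
definition alg_choices :: "nat \<Rightarrow> (nat \<Rightarrow> real) \<Rightarrow> (nat \<Rightarrow> nat \<Rightarrow> real) \<Rightarrow> (nat \<Rightarrow> nat list) \<Rightarrow> (nat \<Rightarrow> nat) \<Rightarrow> bool" where
  "alg_choices n h t C p0 \<longleftrightarrow>
     (\<forall>i\<in>{1..num_classes n h}. cls n h i \<noteq> {} \<longrightarrow>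
        (card (cls n h i) = 1 \<longrightarrow> C i = [the_elem (cls n h i)]) \<and>
        (card (cls n h i) \<ge> 2 \<longrightarrow> (\<exists>E. min_spanning_tree t (cls n h i) E \<and> euler_tour E (C i))) \<and>
        p0 i < length (C i))"

definition phase_steps :: "(nat \<Rightarrow> nat \<Rightarrow> real) \<Rightarrow> real \<Rightarrow> nat list \<Rightarrow> nat \<Rightarrow> nat" where
  "phase_steps t D c p = (LEAST k. D \<le> (\<Sum>j<k. t (c ! ((p + j) mod length c)) (c ! ((p + j + 1) mod length c))))"

text \<open>One phase on tour \<open>c\<close> from marked position \<open>p\<close>: the list of points visited
  (starting with the marked point, reached by direct travel) and the new marked position.\<close>
definition phase :: "(nat \<Rightarrow> nat \<Rightarrow> real) \<Rightarrow> real \<Rightarrow> nat list \<Rightarrow> nat \<Rightarrow> nat list \<times> nat" where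
  "phase t D c p =
     (if length c \<le> 1 then ([c ! p], p)
      else let k = phase_steps t D c p
           in (map (\<lambda>j. c ! ((p + j) mod length c)) [0..<k + 1], (p + k) mod length c))"

definition alg_round :: "nat \<Rightarrow> (nat \<Rightarrow> real) \<Rightarrow> (nat \<Rightarrow> nat \<Rightarrow> real) \<Rightarrow> (nat \<Rightarrow> nat list) \<Rightarrow>
    (nat \<Rightarrow> nat) \<Rightarrow> nat list \<times> (nat \<Rightarrow> nat)" where
  "alg_round n h t C pos =
     fold (\<lambda>i (acc, ps). if cls n h i = {} then (acc, ps)
                          else (case phase t (Dmax n t) (C i) (ps i) of
                                  (l, p') \<Rightarrow> (acc @ l, ps(i := p'))))
          [1..<num_classes n h + 1] ([], pos)"

definition alg_state :: "nat \<Rightarrow> (nat \<Rightarrow> real) \<Rightarrow> (nat \<Rightarrow> nat \<Rightarrow> real) \<Rightarrow> (nat \<Rightarrow> nat list) \<Rightarrow>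
    (nat \<Rightarrow> nat) \<Rightarrow> nat \<Rightarrow> nat \<Rightarrow> nat" where
  "alg_state n h t C p0 r = ((\<lambda>pos. snd (alg_round n h t C pos)) ^^ r) p0"

definition alg_round_list :: "nat \<Rightarrow> (nat \<Rightarrow> real) \<Rightarrow> (nat \<Rightarrow> nat \<Rightarrow> real) \<Rightarrow> (nat \<Rightarrow> nat list) \<Rightarrow>
    (nat \<Rightarrow> nat) \<Rightarrow> nat \<Rightarrow> nat list" where
  "alg_round_list n h t C p0 r = fst (alg_round n h t C (alg_state n h t C p0 r))"

text \<open>Infinite concatenation of a sequence of (nonempty) lists.\<close>
definition flat_prefix :: "(nat \<Rightarrow> 'a list) \<Rightarrow> nat \<Rightarrow> nat" where
  "flat_prefix R r = (\<Sum>q<r. length (R q))"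

definition flat :: "(nat \<Rightarrow> 'a list) \<Rightarrow> nat \<Rightarrow> 'a" where
  "flat R k = (let r = (LEAST r. k < flat_prefix R (Suc r)) in R r ! (k - flat_prefix R r))"

definition alg_walk :: "nat \<Rightarrow> (nat \<Rightarrow> real) \<Rightarrow> (nat \<Rightarrow> nat \<Rightarrow> real) \<Rightarrow> (nat \<Rightarrow> nat list) \<Rightarrow>
    (nat \<Rightarrow> nat) \<Rightarrow> nat \<Rightarrow> nat" where
  "alg_walk n h t C p0 k = (if k = 0 then 0 else flat (alg_round_list n h t C p0) (k - 1))"

end

theory Submission
  imports Defs
begin

text \<open>Two lower bounds hold for any walk whose heights never exceed \<open>M\<close>. Every point \<open>x\<close>
  has a point \<open>y\<close> at distance at least \<open>D/2\<close>; after a visit of \<open>y\<close> that follows a visit of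
  \<open>x\<close>, the bamboo at \<open>x\<close> has gone uncut for at least \<open>t x y\<close>, so \<open>M \<ge> h x D / 2\<close>.
  If all rates in a set \<open>V\<close> are at least \<open>hl\<close>, then every point of \<open>V\<close> is visited in the
  window \<open>(M/hl, 3M/hl]\<close>; visiting them in that order is a spanning path of \<open>V\<close>, so
  \<open>M \<ge> hl w(MST(V)) / 2\<close>.

  Conversely, a phase of Algorithm 2 costs one direct trip plus between \<open>D\<close> and \<open>2D\<close> along
  the tour, so a round costs at most \<open>3sD\<close>, and the tour \<open>C i\<close>, of length \<open>2 w(T i)\<close>, is
  traversed completely within \<open>\<lceil>2 w(T i)/D\<rceil>\<close> rounds. Hence a bamboo of class \<open>i\<close> is cut
  at least every \<open>O(s (D + w(T i)))\<close> time units; since rates within a class differ by less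
  than a factor 2, both terms are \<open>O(s OPT)\<close>, and \<open>s \<le> 2 log\<^sub>2\<lceil>h_max/h_min\<rceil>\<close>.\<close>

section \<open>Walks, cuts and heights\<close>

lemma bgt_instanceD:
  assumes "bgt_instance n h t"
  shows "\<And>i. i < n \<Longrightarrow> h i > 0" "\<And>i j. i \<le> j \<Longrightarrow> j < n \<Longrightarrow> h j \<le> h i"
    "\<And>i j. i < n \<Longrightarrow> j < n \<Longrightarrow> i \<noteq> j \<Longrightarrow> t i j > 0"
    "\<And>i j. i < n \<Longrightarrow> j < n \<Longrightarrow> i \<noteq> j \<Longrightarrow> t i j = t j i"
    "\<And>i j k. i < n \<Longrightarrow> j < n \<Longrightarrow> k < n \<Longrightarrow> i \<noteq> j \<Longrightarrow> j \<noteq> k \<Longrightarrow> i \<noteq> k \<Longrightarrow>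
      t i k \<le> t i j + t j k"
  using assms unfolding bgt_instance_def by blast+

lemma tt_nonneg: "bgt_instance n h t \<Longrightarrow> a < n \<Longrightarrow> b < n \<Longrightarrow> 0 \<le> tt t a b"
  unfolding tt_def using bgt_instanceD(3) by fastforce

lemma tt_commute: "bgt_instance n h t \<Longrightarrow> a < n \<Longrightarrow> b < n \<Longrightarrow> tt t a b = tt t b a"
  unfolding tt_def using bgt_instanceD(4) by fastforce

lemma tt_triangle:
  assumes "bgt_instance n h t" "a < n" "b < n" "c < n"
  shows "tt t a c \<le> tt t a b + tt t b c"
proof -
  have "0 \<le> tt t a b" "0 \<le> tt t b c" "0 \<le> tt t a c" "tt t a b = tt t b a"
    using tt_nonneg tt_commute assms by auto
  then show ?thesis
    using bgt_instanceD(5)[OF assms] unfolding tt_def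
    by (cases "a = b"; cases "b = c"; cases "a = c"; auto)
qed

lemma finite_travel_times:
  fixes t :: "nat \<Rightarrow> nat \<Rightarrow> real"
  shows "finite {t i j | i j. i < n \<and> j < n \<and> i \<noteq> j}"
  by (rule finite_subset[of _ "(\<lambda>(i, j). t i j) ` ({..<n} \<times> {..<n})"]) auto

lemma Dmax_ge: "a < n \<Longrightarrow> b < n \<Longrightarrow> a \<noteq> b \<Longrightarrow> t a b \<le> Dmax n t"
  unfolding Dmax_def by (intro Max_ge[OF finite_travel_times]) auto

lemma Dmax_attained:
  assumes "2 \<le> n"
  obtains a b where "a < n" "b < n" "a \<noteq> b" "t a b = Dmax n t"
proof -
  have "t 0 1 \<in> {t i j | i j. i < n \<and> j < n \<and> i \<noteq> j}"
    using assms by force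
  then have "Dmax n t \<in> {t i j | i j. i < n \<and> j < n \<and> i \<noteq> j}"
    unfolding Dmax_def by (intro Max_in[OF finite_travel_times]) blast
  then show ?thesis using that by auto
qed

lemma walk_time_Suc: "walk_time t w (Suc k) = walk_time t w k + tt t (w k) (w (Suc k))"
  unfolding walk_time_def by simp

lemma walk_time_add_diff:
  "walk_time t w (a + l) - walk_time t w a = (\<Sum>j<l. tt t (w (a + j)) (w (a + j + 1)))"
  by (induction l) (auto simp: walk_time_Suc)

lemma walk_time_mono:
  assumes "bgt_instance n h t" "\<forall>k. w k < n" "j \<le> k"
  shows "walk_time t w j \<le> walk_time t w k"
  using assms(3)
proof (induction k)
  case (Suc k)
  then show ?case
    using walk_time_Suc[of t w k] tt_nonneg[OF assms(1)] assms(2) le_Suc_eq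
    by (metis add_increasing2 order_refl)
qed simp

lemma walk_time_nonneg: "bgt_instance n h t \<Longrightarrow> \<forall>k. w k < n \<Longrightarrow> 0 \<le> walk_time t w k"
  using walk_time_mono[of n h t w 0 k] by (simp add: walk_time_def)

lemma tt_le_walk_time_diff:
  assumes "bgt_instance n h t" "\<forall>k. w k < n" "j \<le> k"
  shows "tt t (w j) (w k) \<le> walk_time t w k - walk_time t w j"
  using assms(3)
proof (induction k)
  case (Suc k)
  show ?case
  proof (cases "j = Suc k")
    case False
    then show ?thesis
      using Suc walk_time_Suc[of t w k] tt_triangle[OF assms(1), of "w j" "w k" "w (Suc k)"] assms(2)
      by fastforce
  qed (simp add: tt_def)
qed (simp add: tt_def)

lemma le_last_cut: "w k = i \<Longrightarrow> T k \<le> \<tau> \<Longrightarrow> T k \<le> last_cut w T i \<tau>"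
  unfolding last_cut_def
  by (rule cSup_upper) (auto intro!: bdd_aboveI[of _ "max 0 \<tau>"])

lemma last_cut_nonneg: "0 \<le> last_cut w T i \<tau>"
  unfolding last_cut_def
  by (rule cSup_upper) (auto intro!: bdd_aboveI[of _ "max 0 \<tau>"])

lemma last_cut_le: "0 \<le> \<tau> \<Longrightarrow> last_cut w T i \<tau> \<le> \<tau>"
  unfolding last_cut_def by (rule cSup_least) auto

lemma less_last_cut_obtains_visit:
  assumes "y < last_cut w T i \<tau>" "0 \<le> y"
  obtains k where "w k = i" "T k \<le> \<tau>" "y < T k"
proof -
  have "\<exists>x\<in>{0} \<union> {T k | k. w k = i \<and> T k \<le> \<tau>}. y < x"
    using assms(1) unfolding last_cut_def
    by (subst less_cSup_iff[symmetric]) (auto intro!: bdd_aboveI[of _ "max 0 \<tau>"])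
  then show ?thesis using assms(2) that by auto
qed

lemma height_at_0: "height h w T i 0 = 0"
  unfolding height_def using last_cut_le[of 0 w T i] last_cut_nonneg[of w T i 0] by simp

lemma last_cut_ge_if_height_le:
  "0 < h i \<Longrightarrow> height h w T i \<tau> \<le> M \<Longrightarrow> \<tau> - M / h i \<le> last_cut w T i \<tau>"
  unfolding height_def by (simp add: field_simps mult.commute)

lemma height_le_if_last_cut_ge:
  "0 < h i \<Longrightarrow> \<tau> - last_cut w T i \<tau> \<le> B \<Longrightarrow> height h w T i \<tau> \<le> h i * B"
  unfolding height_def by (simp add: mult_left_mono)

definition heights_le :: "nat \<Rightarrow> (nat \<Rightarrow> real) \<Rightarrow> (nat \<Rightarrow> nat) \<Rightarrow> (nat \<Rightarrow> real) \<Rightarrow> real \<Rightarrow> bool" where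
  "heights_le n h w T M \<longleftrightarrow> (\<forall>i<n. \<forall>\<tau>\<ge>0. height h w T i \<tau> \<le> M)"

lemma heights_le_nonneg: "heights_le n h w T M \<Longrightarrow> 1 \<le> n \<Longrightarrow> 0 \<le> M"
  unfolding heights_le_def using height_at_0[of h w T 0] by fastforce

lemma ereal_le_MH:
  assumes "1 \<le> n" "\<And>M. heights_le n h w T M \<Longrightarrow> X \<le> M"
  shows "ereal X \<le> MH n h w T"
proof (cases "MH n h w T")
  case (real M)
  have "ereal (height h w T i \<tau>) \<le> MH n h w T" if "i < n" "0 \<le> \<tau>" for i \<tau>
    unfolding MH_def using that by (meson SUP_upper atLeast_iff lessThan_iff order_trans)
  then have "heights_le n h w T M" unfolding heights_le_def using real by simp
  then show ?thesis using assms(2) real by simp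
next
  case MInf
  have "ereal (height h w T 0 0) \<le> MH n h w T"
    unfolding MH_def using assms(1) by (intro SUP_upper2[of 0]) (auto intro: SUP_upper2[of 0])
  then show ?thesis using MInf by simp
qed simp

lemma MH_le: "(\<And>i \<tau>. i < n \<Longrightarrow> 0 \<le> \<tau> \<Longrightarrow> ereal (height h w T i \<tau>) \<le> B) \<Longrightarrow> MH n h w T \<le> B"
  unfolding MH_def by (auto intro!: SUP_least)

lemma ereal_le_OPT:
  assumes "1 \<le> n" "\<And>w M. robot_walk n t w \<Longrightarrow> heights_le n h w (walk_time t w) M \<Longrightarrow> X \<le> M"
  shows "ereal X \<le> OPT n h t"
  unfolding OPT_def using ereal_le_MH[OF assms(1) assms(2)] by (auto intro!: INF_greatest)

section \<open>Lower bounds on the optimum\<close>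

fun path_edges :: "nat list \<Rightarrow> (nat \<times> nat) set" where
  "path_edges (a # b # xs) = insert (min a b, max a b) (path_edges (b # xs))"
| "path_edges _ = {}"

fun path_weight :: "(nat \<Rightarrow> nat \<Rightarrow> real) \<Rightarrow> nat list \<Rightarrow> real" where
  "path_weight t (a # b # xs) = t a b + path_weight t (b # xs)"
| "path_weight t _ = 0"

lemma path_edges_subset: "(a, b) \<in> path_edges xs \<Longrightarrow> a \<in> set xs \<and> b \<in> set xs"
  by (induction xs rule: path_edges.induct) (auto simp: min_def max_def split: if_splits)

lemma path_edges_ordered: "distinct xs \<Longrightarrow> (a, b) \<in> path_edges xs \<Longrightarrow> a < b"
  by (induction xs rule: path_edges.induct) (auto simp: min_def max_def split: if_splits)

lemma finite_path_edges: "finite (path_edges xs)"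
  by (induction xs rule: path_edges.induct) auto

lemma first_edge_notin_path_edges:
  assumes "distinct (a # b # xs)"
  shows "(min a b, max a b) \<notin> path_edges (b # xs)"
proof
  assume "(min a b, max a b) \<in> path_edges (b # xs)"
  then have "min a b \<in> set (b # xs)" "max a b \<in> set (b # xs)"
    using path_edges_subset by blast+
  moreover have "a \<notin> set (b # xs)" using assms by auto
  ultimately show False by (cases "a \<le> b") (auto simp: min_def max_def)
qed

lemma card_path_edges: "distinct xs \<Longrightarrow> xs \<noteq> [] \<Longrightarrow> card (path_edges xs) + 1 = length xs"
proof (induction xs rule: path_edges.induct)
  case (1 a b xs)
  then show ?case using first_edge_notin_path_edges finite_path_edges by simp
qed auto

lemma path_edges_connect:
  assumes "path_edges xs \<subseteq> E" "a \<in> set xs"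
  shows "(hd xs, a) \<in> {(x, y). adj E x y}\<^sup>* \<and> (a, hd xs) \<in> {(x, y). adj E x y}\<^sup>*"
  using assms
proof (induction xs rule: path_edges.induct)
  case (1 x y xs)
  have "adj E x y" "adj E y x"
    using "1.prems"(1) by (cases "x \<le> y"; simp add: adj_def min_def max_def)+
  then show ?case
    using 1 by (cases "a = x")
      (auto simp del: rtrancl_eq_or_trancl
        intro: converse_rtrancl_into_rtrancl rtrancl_into_rtrancl)
qed auto

lemma spanning_tree_path_edges:
  assumes "distinct xs" "xs \<noteq> []"
  shows "spanning_tree (set xs) (path_edges xs)"
  unfolding spanning_tree_def
proof (intro conjI ballI)
  show "path_edges xs \<subseteq> {(a, b). a \<in> set xs \<and> b \<in> set xs \<and> a < b}"
    using path_edges_subset path_edges_ordered[OF assms(1)] by blast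
  show "(a, b) \<in> {(x, y). adj (path_edges xs) x y}\<^sup>*" if "a \<in> set xs" "b \<in> set xs" for a b
    using path_edges_connect[of xs "path_edges xs"] that by (meson order_refl rtrancl_trans)
  show "card (path_edges xs) + 1 = card (set xs)"
    using card_path_edges[OF assms] distinct_card[OF assms(1)] by simp
qed simp

lemma tree_weight_path_edges:
  "distinct xs \<Longrightarrow> (\<And>a b. a \<in> set xs \<Longrightarrow> b \<in> set xs \<Longrightarrow> t a b = t b a) \<Longrightarrow>
    tree_weight t (path_edges xs) = path_weight t xs"
proof (induction xs rule: path_edges.induct)
  case (1 a b xs)
  have "t (min a b) (max a b) = t a b"
    using "1.prems"(2)[of a b] by (auto simp: min_def max_def)
  then show ?case
    using 1 first_edge_notin_path_edges finite_path_edges unfolding tree_weight_def by simp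
qed (auto simp: tree_weight_def)

locale continuous_bgt =
  fixes n :: nat and h :: "nat \<Rightarrow> real" and t :: "nat \<Rightarrow> nat \<Rightarrow> real"
  assumes bgt: "bgt_instance n h t" and two_le_n: "2 \<le> n"
begin

abbreviation D :: real where "D \<equiv> Dmax n t"

lemma Dmax_pos: "0 < D"
  using bgt_instanceD(3)[OF bgt] by (metis Dmax_attained two_le_n)

lemma tt_le_Dmax: "a < n \<Longrightarrow> b < n \<Longrightarrow> tt t a b \<le> D"
  unfolding tt_def using Dmax_ge[of a n b t] Dmax_pos by auto

lemma far_point:
  assumes "x < n"
  obtains y where "y < n" "y \<noteq> x" "D / 2 \<le> t x y"
proof -
  obtain a b where ab: "a < n" "b < n" "a \<noteq> b" "t a b = D"
    using Dmax_attained[OF two_le_n] by blast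
  show ?thesis
  proof (cases "x = a \<or> x = b")
    case True
    then show ?thesis
      using that ab bgt_instanceD(4)[OF bgt] Dmax_pos by (metis field_sum_of_halves le_add_same_cancel1 less_eq_real_def half_gt_zero)
  next
    case False
    then have "D \<le> t x a + t x b"
      using ab assms bgt_instanceD(4,5)[OF bgt] by metis
    then have "D / 2 \<le> t x a \<or> D / 2 \<le> t x b" by linarith
    then show ?thesis using that ab False by metis
  qed
qed

lemma travel_time_commute: "a < n \<Longrightarrow> b < n \<Longrightarrow> t a b = t b a"
  using bgt_instanceD(4)[OF bgt] by (cases "a = b") auto

definition min_travel_time :: real where
  "min_travel_time = Min {t i j | i j. i < n \<and> j < n \<and> i \<noteq> j}"

lemma min_travel_time_le: "a < n \<Longrightarrow> b < n \<Longrightarrow> a \<noteq> b \<Longrightarrow> min_travel_time \<le> t a b"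
  unfolding min_travel_time_def by (intro Min_le[OF finite_travel_times]) auto

lemma min_travel_time_pos: "0 < min_travel_time"
proof -
  have "t 0 1 \<in> {t i j | i j. i < n \<and> j < n \<and> i \<noteq> j}" using two_le_n by force
  then have "min_travel_time \<in> {t i j | i j. i < n \<and> j < n \<and> i \<noteq> j}"
    unfolding min_travel_time_def by (intro Min_in[OF finite_travel_times]) blast
  then show ?thesis using bgt_instanceD(3)[OF bgt] by auto
qed

lemma heights_le_travel_time:
  assumes w: "\<forall>k. w k < n" and M: "heights_le n h w (walk_time t w) M"
    and x: "x < n" and y: "y < n" "y \<noteq> x"
  shows "h x * t x y \<le> M"
proof (rule ccontr)
  define T where "T = walk_time t w"
  have hx: "0 < h x" and hy: "0 < h y" and txy: "0 < t x y"
    using bgt_instanceD(1,3)[OF bgt] x y by auto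
  have M0: "0 \<le> M" using heights_le_nonneg[OF M] two_le_n by simp
  have T0: "0 \<le> T k" for k using walk_time_nonneg[OF bgt w] T_def by simp
  have dist: "j \<le> k \<Longrightarrow> tt t (w j) (w k) \<le> T k - T j" for j k
    using tt_le_walk_time_diff[OF bgt w] T_def by simp
  have cut: "i < n \<Longrightarrow> 0 \<le> \<tau> \<Longrightarrow> \<tau> - M / h i \<le> last_cut w T i \<tau>" for i \<tau>
    using M last_cut_ge_if_height_le bgt_instanceD(1)[OF bgt] unfolding heights_le_def T_def by blast
  assume "\<not> h x * t x y \<le> M"
  then have Mlt: "M / h x < t x y" using hx by (simp add: field_simps mult.commute)
  have "0 < last_cut w T x (M / h x + 1)" using cut[OF x, of "M / h x + 1"] M0 hx by simp
  then obtain j where j: "w j = x" by (rule less_last_cut_obtains_visit) simp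
  have "T j < last_cut w T y (T j + M / h y + 1)"
    using cut[OF y(1), of "T j + M / h y + 1"] M0 hy T0[of j] by simp
  then obtain k where k: "w k = y" "T j < T k"
    using T0[of j] by (auto elim: less_last_cut_obtains_visit)
  then have "j \<le> k" using walk_time_mono[OF bgt w] T_def by (meson linorder_le_cases not_less)
  then have "t x y \<le> T k - T j" using dist[of j k] j k y by (simp add: tt_def)
  moreover have "T k - t x y < last_cut w T x (T k)" using cut[OF x T0[of k]] Mlt by linarith
  ultimately obtain m where m: "w m = x" "T m \<le> T k" "T k - t x y < T m"
    using T0[of j] by (auto elim: less_last_cut_obtains_visit)
  show False
  proof (cases "m \<le> k")
    case True
    then show False using dist[of m k] m k y by (simp add: tt_def)
  next
    case False
    then have "t y x \<le> T m - T k" using dist[of k m] m k y by (simp add: tt_def)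
    moreover have "0 < t y x" using x y bgt_instanceD(3)[OF bgt] by simp
    ultimately show False using m(2) by linarith
  qed
qed

lemma heights_le_half_Dmax:
  "\<forall>k. w k < n \<Longrightarrow> heights_le n h w (walk_time t w) M \<Longrightarrow> x < n \<Longrightarrow> h x * D / 2 \<le> M"
  using heights_le_travel_time bgt_instanceD(1)[OF bgt]
  by (smt (verit) far_point mult_left_mono times_divide_eq_right)

lemma OPT_ge_half_Dmax: "x < n \<Longrightarrow> ereal (h x * D / 2) \<le> OPT n h t"
  using heights_le_half_Dmax two_le_n by (intro ereal_le_OPT) (auto simp: robot_walk_def)

lemma path_weight_le_walk_time:
  assumes w: "\<forall>k. w k < n"
  shows "sorted ks \<Longrightarrow> distinct (map w ks) \<Longrightarrow> ks \<noteq> [] \<Longrightarrow>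
    path_weight t (map w ks) \<le> walk_time t w (last ks) - walk_time t w (hd ks)"
proof (induction ks rule: induct_list012)
  case (3 a b ks)
  then have "tt t (w a) (w b) \<le> walk_time t w b - walk_time t w a"
    using tt_le_walk_time_diff[OF bgt w] by simp
  moreover have "tt t (w a) (w b) = t (w a) (w b)" using "3.prems"(2) by (simp add: tt_def)
  ultimately show ?case using 3 by simp
qed auto

lemma mst_weight_le_visit_span:
  assumes w: "\<forall>k. w k < n" and ks: "sorted ks" "distinct (map w ks)" "ks \<noteq> []"
    and mst: "min_spanning_tree t (set (map w ks)) E"
  shows "tree_weight t E \<le> walk_time t w (last ks) - walk_time t w (hd ks)"
proof -
  have "tree_weight t E \<le> tree_weight t (path_edges (map w ks))"
    using mst spanning_tree_path_edges[OF ks(2)] ks(3) unfolding min_spanning_tree_def by simp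
  also have "\<dots> = path_weight t (map w ks)"
    using w travel_time_commute by (intro tree_weight_path_edges[OF ks(2)]) auto
  also have "\<dots> \<le> walk_time t w (last ks) - walk_time t w (hd ks)"
    by (rule path_weight_le_walk_time[OF w ks])
  finally show ?thesis .
qed

lemma visit_in_window:
  assumes M: "heights_le n h w (walk_time t w) M" and z: "z < n" and "0 \<le> a" "M / h z < \<Delta>"
  obtains k where "w k = z" "a < walk_time t w k" "walk_time t w k \<le> a + \<Delta>"
proof -
  have hz: "0 < h z" using bgt_instanceD(1)[OF bgt z] .
  then have "0 \<le> M / h z" using heights_le_nonneg[OF M] two_le_n by simp
  then have "height h w (walk_time t w) z (a + \<Delta>) \<le> M"
    using M z assms(3,4) unfolding heights_le_def by simp
  then have "a + \<Delta> - M / h z \<le> last_cut w (walk_time t w) z (a + \<Delta>)"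
    by (rule last_cut_ge_if_height_le[of h z, OF hz])
  then have "a < last_cut w (walk_time t w) z (a + \<Delta>)" using assms(4) by linarith
  then show ?thesis using that assms(3) by (auto elim: less_last_cut_obtains_visit)
qed

lemma heights_le_mst_weight:
  assumes w: "\<forall>k. w k < n" and M: "heights_le n h w (walk_time t w) M"
    and V: "V \<subseteq> {..<n}" "V \<noteq> {}" and mst: "min_spanning_tree t V E"
    and hl: "0 < hl" "\<forall>z\<in>V. hl \<le> h z"
  shows "hl * tree_weight t E \<le> 2 * M"
proof -
  define T where "T = walk_time t w"
  define \<Delta> where "\<Delta> = M / hl"
  have "0 < h 0 * D / 2" using bgt_instanceD(1)[OF bgt, of 0] Dmax_pos two_le_n by simp
  then have "0 < M" using heights_le_half_Dmax[OF w M, of 0] two_le_n by simp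
  have "\<exists>k. w k = z \<and> \<Delta> < T k \<and> T k \<le> 3 * \<Delta>" if z: "z \<in> V" for z
  proof -
    have "M / h z \<le> \<Delta>"
      unfolding \<Delta>_def using hl z \<open>0 < M\<close> by (intro divide_left_mono) auto
    also have "\<dots> < 2 * \<Delta>" using \<open>0 < M\<close> hl by (simp add: \<Delta>_def field_simps)
    finally have "M / h z < 2 * \<Delta>" .
    moreover have "0 \<le> \<Delta>" using \<open>0 < M\<close> hl by (simp add: \<Delta>_def)
    ultimately show ?thesis
      using visit_in_window[OF M, of z \<Delta> "2 * \<Delta>"] z V(1) unfolding T_def by force
  qed
  then obtain visit where visit: "\<And>z. z \<in> V \<Longrightarrow> w (visit z) = z \<and> \<Delta> < T (visit z) \<and> T (visit z) \<le> 3 * \<Delta>"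
    by metis
  have "finite V" using mst unfolding min_spanning_tree_def spanning_tree_def by blast
  define ks where "ks = sorted_list_of_set (visit ` V)"
  have ks: "set ks = visit ` V" "sorted ks" "distinct ks" "ks \<noteq> []"
    using \<open>finite V\<close> V(2) unfolding ks_def by auto
  have "inj_on visit V" using visit by (metis inj_onI)
  have "set (map w ks) = V" using ks(1) visit by (force simp: image_image)
  moreover have "distinct (map w ks)"
    using ks card_image[OF \<open>inj_on visit V\<close>] distinct_card[OF ks(3)] \<open>set (map w ks) = V\<close>
    by (metis card_distinct length_map)
  ultimately have "tree_weight t E \<le> T (last ks) - T (hd ks)"
    using mst_weight_le_visit_span[OF w ks(2) _ ks(4)] mst T_def by simp
  also have "\<dots> < 2 * \<Delta>"
  proof -
    obtain z1 z2 where "z1 \<in> V" "z2 \<in> V" "last ks = visit z1" "hd ks = visit z2"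
      using ks(1) last_in_set[OF ks(4)] hd_in_set[OF ks(4)] by auto
    then show ?thesis using visit[of z1] visit[of z2] by simp
  qed
  finally show ?thesis using hl unfolding \<Delta>_def by (simp add: field_simps)
qed

lemma OPT_ge_mst_weight:
  assumes "V \<subseteq> {..<n}" "V \<noteq> {}" "min_spanning_tree t V E" "0 < hl" "\<forall>z\<in>V. hl \<le> h z"
  shows "ereal (hl * tree_weight t E / 2) \<le> OPT n h t"
proof (rule ereal_le_OPT)
  fix w M assume "robot_walk n t w" "heights_le n h w (walk_time t w) M"
  then show "hl * tree_weight t E / 2 \<le> M"
    using heights_le_mst_weight[OF _ _ assms, of w M] by (simp add: robot_walk_def)
qed (use two_le_n in simp)

end

section \<open>Euler tours as cyclic walks\<close>

lemma adj_in_tree_vertices: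
  "E \<subseteq> {(a, b). a \<in> V \<and> b \<in> V \<and> a < b} \<Longrightarrow> adj E x y \<Longrightarrow> x \<in> V \<and> y \<in> V \<and> x \<noteq> y"
  unfolding adj_def by auto

lemma min_max_eq_iff_doubleton_eq:
  "(a::nat) < b \<Longrightarrow> ((min x y, max x y) = (a, b)) = ({x, y} = {a, b})"
  by (auto simp: doubleton_eq_iff min_def max_def)

lemma set_euler_tour:
  assumes sp: "spanning_tree V E" and et: "euler_tour E c" and V: "2 \<le> card V"
  shows "set c = V"
proof
  have E: "E \<subseteq> {(a, b). a \<in> V \<and> b \<in> V \<and> a < b}" using sp unfolding spanning_tree_def by blast
  have "adj E (c ! k) (c ! ((k + 1) mod length c))" if "k < length c" for k
    using et that unfolding euler_tour_def by blast
  then show "set c \<subseteq> V" using adj_in_tree_vertices[OF E] by (metis in_set_conv_nth subsetI)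
  show "V \<subseteq> set c"
  proof
    fix z assume z: "z \<in> V"
    have "\<not> V \<subseteq> {z}" using V card_mono[of "{z}" V] by auto
    then obtain b where b: "b \<in> V" "b \<noteq> z" by blast
    have "(z, b) \<in> {(x, y). adj E x y}\<^sup>*" using sp z b unfolding spanning_tree_def by blast
    then obtain y where "adj E z y" using b(2) by (induction rule: converse_rtrancl_induct) auto
    then obtain e where e: "e \<in> E" "z = fst e \<or> z = snd e" unfolding adj_def by force
    have "card {k. k < length c \<and> {c ! k, c ! ((k + 1) mod length c)} = {fst e, snd e}} = 2"
      using et e(1) unfolding euler_tour_def by blast
    then obtain k where k: "k < length c" "{c ! k, c ! ((k + 1) mod length c)} = {fst e, snd e}"
      by (metis (mono_tags, lifting) Collect_empty_eq card.empty zero_neq_numeral)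
    then have "(k + 1) mod length c < length c" by (intro mod_less_divisor) linarith
    then show "z \<in> set c" using k e(2) by (metis doubleton_eq_iff insertI1 nth_mem)
  qed
qed

context continuous_bgt
begin

text \<open>A cyclic list \<open>c\<close> is walked along with unbounded positions \<open>j\<close>, read modulo its length.\<close>
definition cycle_step :: "nat list \<Rightarrow> nat \<Rightarrow> real" where
  "cycle_step c j = t (c ! (j mod length c)) (c ! (Suc j mod length c))"

definition cycle_length :: "nat list \<Rightarrow> real" where
  "cycle_length c = (\<Sum>j<length c. cycle_step c j)"

definition proper_cycle :: "nat list \<Rightarrow> bool" where
  "proper_cycle c \<longleftrightarrow> 2 \<le> length c \<and> (\<forall>k<length c. c ! k < n) \<and>
     (\<forall>k<length c. c ! k \<noteq> c ! ((k + 1) mod length c))"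

lemma cycle_step_mod: "a mod length c = b mod length c \<Longrightarrow> cycle_step c a = cycle_step c b"
  unfolding cycle_step_def by (metis mod_Suc_eq)

lemma proper_cycle_step:
  assumes "proper_cycle c"
  shows "c ! (j mod length c) \<noteq> c ! (Suc j mod length c)" "c ! (j mod length c) < n"
    "c ! (Suc j mod length c) < n"
proof -
  have "j mod length c < length c" "Suc j mod length c < length c"
    using assms unfolding proper_cycle_def by (auto intro!: mod_less_divisor)
  then show "c ! (j mod length c) \<noteq> c ! (Suc j mod length c)" "c ! (j mod length c) < n"
    "c ! (Suc j mod length c) < n"
    using assms unfolding proper_cycle_def by (auto simp: mod_Suc_eq)
qed

lemma cycle_step_eq_tt:
  "proper_cycle c \<Longrightarrow> tt t (c ! (j mod length c)) (c ! (Suc j mod length c)) = cycle_step c j"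
  using proper_cycle_step(1) unfolding tt_def cycle_step_def by simp

lemma cycle_step_bounds:
  assumes "proper_cycle c"
  shows "min_travel_time \<le> cycle_step c j" "cycle_step c j \<le> D"
  using min_travel_time_le[OF proper_cycle_step(2,3,1)[OF assms]]
    Dmax_ge[OF proper_cycle_step(2,3,1)[OF assms]]
  unfolding cycle_step_def by simp_all

lemma proper_cycle_euler_tour:
  assumes sp: "spanning_tree V E" and et: "euler_tour E c" and V: "V \<subseteq> {..<n}" "2 \<le> card V"
  shows "proper_cycle c"
proof -
  have E: "E \<subseteq> {(a, b). a \<in> V \<and> b \<in> V \<and> a < b}" and "card E + 1 = card V"
    using sp unfolding spanning_tree_def by auto
  then have "2 \<le> length c" using et V(2) unfolding euler_tour_def by simp
  moreover have "c ! k \<noteq> c ! ((k + 1) mod length c)" if "k < length c" for k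
    using adj_in_tree_vertices[OF E] et that unfolding euler_tour_def by blast
  moreover have "c ! k < n" if "k < length c" for k
    using set_euler_tour[OF sp et V(2)] V(1) that nth_mem by blast
  ultimately show ?thesis unfolding proper_cycle_def by blast
qed

lemma cycle_length_euler_tour:
  assumes sp: "spanning_tree V E" and et: "euler_tour E c" and V: "V \<subseteq> {..<n}"
  shows "cycle_length c = 2 * tree_weight t E"
proof -
  let ?m = "length c"
  define edge where "edge k = (min (c ! k) (c ! ((k + 1) mod ?m)), max (c ! k) (c ! ((k + 1) mod ?m)))"
    for k
  have E: "E \<subseteq> {(a, b). a \<in> V \<and> b \<in> V \<and> a < b}" "finite V"
    using sp unfolding spanning_tree_def by auto
  then have "finite E" using finite_subset[of E "V \<times> V"] by blast
  have edge: "edge k \<in> E" "cycle_step c k = t (fst (edge k)) (snd (edge k))" if "k < ?m" for k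
  proof -
    have "adj E (c ! k) (c ! ((k + 1) mod ?m))" using et that unfolding euler_tour_def by blast
    then show "edge k \<in> E" using E(1) unfolding edge_def adj_def by (auto simp: min_def max_def)
    then show "cycle_step c k = t (fst (edge k)) (snd (edge k))"
      using that E(1) V travel_time_commute unfolding edge_def cycle_step_def
      by (auto simp: min_def max_def)
  qed
  have edge_fiber: "{k \<in> {..<?m}. edge k = e} = {k. k < ?m \<and> {c ! k, c ! ((k + 1) mod ?m)} = {fst e, snd e}}"
    if "e \<in> E" for e
  proof -
    have "fst e < snd e" using that E(1) by auto
    then show ?thesis
      unfolding edge_def using min_max_eq_iff_doubleton_eq[of "fst e" "snd e"]
      by (metis (no_types, lifting) lessThan_iff prod.collapse)
  qed
  have "cycle_length c = (\<Sum>e\<in>E. \<Sum>k\<in>{k \<in> {..<?m}. edge k = e}. cycle_step c k)"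
    unfolding cycle_length_def using edge(1) by (intro sum.group[symmetric, OF _ \<open>finite E\<close>]) auto
  also have "\<dots> = (\<Sum>e\<in>E. 2 * t (fst e) (snd e))"
  proof (rule sum.cong[OF refl])
    fix e assume "e \<in> E"
    have "(\<Sum>k\<in>{k \<in> {..<?m}. edge k = e}. cycle_step c k) = (\<Sum>k\<in>{k \<in> {..<?m}. edge k = e}. t (fst e) (snd e))"
      using edge(2) by (intro sum.cong) auto
    also have "\<dots> = 2 * t (fst e) (snd e)"
    proof -
      have "card {k. k < ?m \<and> {c ! k, c ! ((k + 1) mod ?m)} = {fst e, snd e}} = 2"
        using et \<open>e \<in> E\<close> unfolding euler_tour_def by blast
      then show ?thesis using edge_fiber[OF \<open>e \<in> E\<close>] by simp
    qed
    finally show "(\<Sum>k\<in>{k \<in> {..<?m}. edge k = e}. cycle_step c k) = 2 * t (fst e) (snd e)" .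
  qed
  also have "\<dots> = 2 * tree_weight t E"
    unfolding tree_weight_def by (simp add: sum_distrib_left case_prod_beta)
  finally show ?thesis .
qed

lemma tree_weight_nonneg:
  assumes "spanning_tree V E" "V \<subseteq> {..<n}"
  shows "0 \<le> tree_weight t E"
  unfolding tree_weight_def
proof (rule sum_nonneg)
  fix e assume "e \<in> E"
  then obtain a b where "e = (a, b)" "a \<in> V" "b \<in> V" "a < b"
    using assms(1) unfolding spanning_tree_def by blast
  then show "0 \<le> (case e of (a, b) \<Rightarrow> t a b)"
    using assms(2) bgt_instanceD(3)[OF bgt, of a b] by fastforce
qed

lemma cycle_length_rotate: "(\<Sum>j<length c. cycle_step c (a + j)) = cycle_length c"
proof (induction a)
  case (Suc a)
  have "(\<Sum>j<Suc (length c). cycle_step c (a + j)) = cycle_step c a + (\<Sum>j<length c. cycle_step c (Suc a + j))"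
    by (subst sum.lessThan_Suc_shift) simp
  moreover have "cycle_step c (a + length c) = cycle_step c a" by (rule cycle_step_mod) simp
  ultimately show ?case using Suc by simp
qed (simp add: cycle_length_def)

lemma cycle_steps_less_cycle_length:
  assumes "proper_cycle c" "b < length c"
  shows "(\<Sum>j<b. cycle_step c (a + j)) < cycle_length c"
proof -
  have pos: "0 < cycle_step c j" for j
    using cycle_step_bounds(1)[OF assms(1), of j] min_travel_time_pos by linarith
  obtain m' where m': "length c = Suc m'" using assms(2) by (cases "length c") auto
  have "(\<Sum>j<b. cycle_step c (a + j)) \<le> (\<Sum>j<m'. cycle_step c (a + j))"
    using assms(2) m' pos by (intro sum_mono2) (simp_all add: less_imp_le)
  also have "\<dots> < (\<Sum>j<length c. cycle_step c (a + j))" using m' pos by simp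
  finally show ?thesis by (simp add: cycle_length_rotate)
qed

lemma cycle_length_pos:
  assumes "proper_cycle c"
  shows "0 < cycle_length c"
proof -
  have "0 < length c" using assms unfolding proper_cycle_def by linarith
  then show ?thesis using cycle_steps_less_cycle_length[OF assms, of 0 0] by simp
qed

lemma phase_steps_eq: "phase_steps t D c p = (LEAST k. D \<le> (\<Sum>j<k. cycle_step c (p + j)))"
  unfolding phase_steps_def cycle_step_def by simp

lemma phase_steps_mod: "phase_steps t D c (p mod length c) = phase_steps t D c p"
proof -
  have "cycle_step c (p mod length c + j) = cycle_step c (p + j)" for j
    by (rule cycle_step_mod) (simp add: mod_add_left_eq)
  then show ?thesis unfolding phase_steps_eq by simp
qed

text \<open>A single step is at most \<open>D\<close>, so a phase overshoots \<open>D\<close> by less than \<open>D\<close>; it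
  terminates because every step takes at least the minimum travel time.\<close>
lemma phase_steps_bounds:
  assumes "proper_cycle c"
  shows "D \<le> (\<Sum>j<phase_steps t D c p. cycle_step c (p + j))"
    "(\<Sum>j<phase_steps t D c p. cycle_step c (p + j)) < 2 * D" "1 \<le> phase_steps t D c p"
proof -
  define N where "N = nat \<lceil>D / min_travel_time\<rceil>"
  have "D / min_travel_time \<le> real N" unfolding N_def by linarith
  then have "D \<le> real N * min_travel_time" using min_travel_time_pos by (simp add: field_simps)
  also have "\<dots> \<le> (\<Sum>j<N. cycle_step c (p + j))"
    using sum_mono[of "{..<N}" "\<lambda>_. min_travel_time"] cycle_step_bounds(1)[OF assms] by simp
  finally show ge: "D \<le> (\<Sum>j<phase_steps t D c p. cycle_step c (p + j))"
    unfolding phase_steps_eq by (rule LeastI)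
  then show "1 \<le> phase_steps t D c p" using Dmax_pos by (cases "phase_steps t D c p") auto
  then obtain k where k: "phase_steps t D c p = Suc k" by (cases "phase_steps t D c p") auto
  then have "\<not> D \<le> (\<Sum>j<k. cycle_step c (p + j))"
    unfolding phase_steps_eq by (intro not_less_Least) simp
  then show "(\<Sum>j<phase_steps t D c p. cycle_step c (p + j)) < 2 * D"
    using k cycle_step_bounds(2)[OF assms, of "p + k"] by simp
qed

lemma phase_proper_cycle:
  "proper_cycle c \<Longrightarrow> phase t D c p =
    (map (\<lambda>j. c ! ((p + j) mod length c)) [0..<phase_steps t D c p + 1], (p + phase_steps t D c p) mod length c)"
  unfolding phase_def proper_cycle_def by (simp add: Let_def)

end

section \<open>Algorithm 2\<close>

lemma fold_phases:
  "distinct is \<Longrightarrow> fold (\<lambda>i (acc, ps). if cls n h i = {} then (acc, ps)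
                          else (case phase t D' (C i) (ps i) of
                                  (l, p') \<Rightarrow> (acc @ l, ps(i := p')))) is (acc, ps) =
   (acc @ concat (map (\<lambda>i. if cls n h i = {} then [] else fst (phase t D' (C i) (ps i))) is),
    (\<lambda>j. if j \<in> set is \<and> cls n h j \<noteq> {} then snd (phase t D' (C j) (ps j)) else ps j))"
proof (induction "is" arbitrary: acc ps)
  case Nil thus ?case by simp
next
  case (Cons i "is")
  have ni: "i \<notin> set is" and d: "distinct is" using Cons.prems by auto
  show ?case
  proof (cases "cls n h i = {}")
    case True
    show ?thesis using True Cons.IH[OF d, of acc ps] by (auto intro!: ext)
  next
    case False
    obtain l p' where lp: "phase t D' (C i) (ps i) = (l, p')" by fastforce
    have eq: "map (\<lambda>j. if cls n h j = {} then [] else fst (phase t D' (C j) ((ps(i := p')) j))) is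
       = map (\<lambda>j. if cls n h j = {} then [] else fst (phase t D' (C j) (ps j))) is"
      using ni by (intro map_cong) auto
    have "fold (\<lambda>i (acc, ps). if cls n h i = {} then (acc, ps)
                          else (case phase t D' (C i) (ps i) of
                                  (l, p') \<Rightarrow> (acc @ l, ps(i := p')))) (i # is) (acc, ps)
      = fold (\<lambda>i (acc, ps). if cls n h i = {} then (acc, ps)
                          else (case phase t D' (C i) (ps i) of
                                  (l, p') \<Rightarrow> (acc @ l, ps(i := p')))) is (acc @ l, ps(i := p'))"
      using False lp by simp
    also have "\<dots> = ((acc @ l) @ concat (map (\<lambda>j. if cls n h j = {} then [] else fst (phase t D' (C j) ((ps(i := p')) j))) is),
    (\<lambda>j. if j \<in> set is \<and> cls n h j \<noteq> {} then snd (phase t D' (C j) ((ps(i := p')) j)) else (ps(i := p')) j))"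
      by (rule Cons.IH[OF d])
    also have "(\<lambda>j. if j \<in> set is \<and> cls n h j \<noteq> {} then snd (phase t D' (C j) ((ps(i := p')) j)) else (ps(i := p')) j)
       = (\<lambda>j. if j \<in> set (i#is) \<and> cls n h j \<noteq> {} then snd (phase t D' (C j) (ps j)) else ps j)"
    proof (rule ext)
      fix j show "(if j \<in> set is \<and> cls n h j \<noteq> {} then snd (phase t D' (C j) ((ps(i := p')) j)) else (ps(i := p')) j)
       = (if j \<in> set (i#is) \<and> cls n h j \<noteq> {} then snd (phase t D' (C j) (ps j)) else ps j)"
        using ni False lp by (cases "j = i") auto
    qed
    finally show ?thesis using eq False lp by simp
  qed
qed

lemma sum_lessThan_add_shift:
  "(\<Sum>j<(x::nat) + y. f (c + j)) = (\<Sum>j<x. f (c + j)) + (\<Sum>j<y. f (c + x + j) :: real)"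
  by (induction y) (auto simp: add.assoc)

lemma crossing_index:
  fixes f :: "nat \<Rightarrow> 'a::linorder"
  shows "a \<le> b \<Longrightarrow> f a \<le> u \<Longrightarrow> u < f b \<Longrightarrow> \<exists>r. a \<le> r \<and> r < b \<and> f r \<le> u \<and> u < f (Suc r)"
proof (induction b)
  case (Suc b)
  show ?case
  proof (cases "a = Suc b")
    case False
    then have "a \<le> b" using Suc.prems by simp
    then show ?thesis
      using Suc by (cases "f b \<le> u") (auto intro: less_SucI simp: not_le)
  qed (use Suc.prems in auto)
qed simp

locale algorithm2 = continuous_bgt +
  fixes C :: "nat \<Rightarrow> nat list" and p0 :: "nat \<Rightarrow> nat"
  assumes hmin_less_hmax: "hmin n h < hmax n h" and choices: "alg_choices n h t C p0"
begin

abbreviation s :: nat where "s \<equiv> num_classes n h"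

lemma num_classes_ge_1: "1 \<le> real s"
  unfolding num_classes_def by simp

lemma hmin_pos: "0 < hmin n h"
  using bgt_instanceD(1)[OF bgt, of "n - 1"] two_le_n unfolding hmin_def by simp

lemma hmin_le: "x < n \<Longrightarrow> hmin n h \<le> h x"
  using bgt_instanceD(2)[OF bgt, of x "n - 1"] unfolding hmin_def by simp

lemma le_hmax: "x < n \<Longrightarrow> h x \<le> hmax n h"
  using bgt_instanceD(2)[OF bgt, of 0 x] unfolding hmax_def by simp

definition class_of :: "nat \<Rightarrow> nat" where
  "class_of x = nat \<lfloor>log 2 (h x / hmin n h)\<rfloor> + 1"

lemma class_of:
  assumes x: "x < n"
  shows "class_of x \<in> {1..s}" "x \<in> cls n h (class_of x)"
proof -
  define q where "q = h x / hmin n h"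
  define f where "f = \<lfloor>log 2 q\<rfloor>"
  have q1: "1 \<le> q" using hmin_le[OF x] hmin_pos by (simp add: q_def)
  then have f0: "0 \<le> f" by (simp add: f_def)
  have "real_of_int f + 1 = real (nat f + 1)" using f0 by simp
  moreover have "2 powr real (nat f + 1) = (2::real) ^ (nat f + 1)" by (rule powr_realpow) simp
  ultimately have pow: "2 powr real_of_int f = (2::real) ^ nat f"
    "2 powr (real_of_int f + 1) = (2::real) ^ (nat f + 1)"
    using f0 powr_realpow[of 2 "nat f"] by (simp, metis)
  have "2 powr real_of_int f \<le> q" "q < 2 powr (real_of_int f + 1)"
    using floor_log_eq_powr_iff[of q 2 f] q1 unfolding f_def by simp_all
  then have "2 ^ nat f \<le> q" "q < 2 ^ (nat f + 1)" using pow by simp_all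
  then show "x \<in> cls n h (class_of x)"
    unfolding cls_def class_of_def q_def[symmetric] f_def[symmetric]
    using x hmin_pos by (simp add: q_def field_simps)
  have "log 2 q \<le> log 2 (hmax n h / hmin n h)"
    using q1 le_hmax[OF x] hmin_pos by (simp add: q_def divide_right_mono)
  then have "f \<le> \<lfloor>log 2 (hmax n h / hmin n h)\<rfloor>" unfolding f_def by (rule floor_mono)
  then show "class_of x \<in> {1..s}"
    unfolding class_of_def num_classes_def q_def[symmetric] f_def[symmetric] by simp
qed

lemma cls_subset: "cls n h i \<subseteq> {..<n}"
  unfolding cls_def by auto

lemma cls_bounds: "x \<in> cls n h i \<Longrightarrow> 2 ^ (i - 1) * hmin n h \<le> h x \<and> h x < 2 ^ i * hmin n h"
  unfolding cls_def by auto

lemma card_cls_cases: "cls n h i \<noteq> {} \<Longrightarrow> card (cls n h i) = 1 \<or> 2 \<le> card (cls n h i)"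
  using finite_subset[OF cls_subset] by (metis One_nat_def card_0_eq less_2_cases not_le finite_lessThan)

lemma singleton_class:
  assumes "i \<in> {1..s}" "cls n h i = {z}"
  shows "C i = [z]"
  using choices assms unfolding alg_choices_def by force

lemma proper_class_tour:
  assumes "i \<in> {1..s}" "2 \<le> card (cls n h i)"
  obtains E where "min_spanning_tree t (cls n h i) E" "euler_tour E (C i)"
    "proper_cycle (C i)" "set (C i) = cls n h i"
proof -
  obtain E where E: "min_spanning_tree t (cls n h i) E" "euler_tour E (C i)"
    using choices assms unfolding alg_choices_def by fastforce
  then have "spanning_tree (cls n h i) E" unfolding min_spanning_tree_def by blast
  then show ?thesis
    using that E proper_cycle_euler_tour[OF _ E(2) cls_subset assms(2)] set_euler_tour[OF _ E(2) assms(2)]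
    by blast
qed

abbreviation marked :: "nat \<Rightarrow> nat \<Rightarrow> nat" where
  "marked r \<equiv> alg_state n h t C p0 r"

abbreviation round_visits :: "nat \<Rightarrow> nat list" where
  "round_visits r \<equiv> alg_round_list n h t C p0 r"

definition phase_visits :: "nat \<Rightarrow> nat \<Rightarrow> nat list" where
  "phase_visits r i = (if cls n h i = {} then [] else fst (phase t D (C i) (marked r i)))"

lemma alg_round_eq: "alg_round n h t C pos =
   (concat (map (\<lambda>i. if cls n h i = {} then [] else fst (phase t D (C i) (pos i))) [1..<s+1]),
    (\<lambda>j. if j \<in> set [1..<s+1] \<and> cls n h j \<noteq> {} then snd (phase t D (C j) (pos j)) else pos j))"
  unfolding alg_round_def using fold_phases[of "[1..<s+1]" n h t D C "[]" pos] by simp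

lemma round_visits_eq: "round_visits r = concat (map (phase_visits r) [1..<s+1])"
  unfolding alg_round_list_def phase_visits_def alg_round_eq by simp

lemma marked_0: "marked 0 = p0"
  unfolding alg_state_def by simp

lemma marked_Suc:
  "marked (Suc r) i = (if i \<in> {1..s} \<and> cls n h i \<noteq> {} then snd (phase t D (C i) (marked r i)) else marked r i)"
  unfolding alg_state_def using alg_round_eq by simp

lemma marked_less_length: "i \<in> {1..s} \<Longrightarrow> cls n h i \<noteq> {} \<Longrightarrow> marked r i < length (C i)"
proof (induction r)
  case 0
  then show ?case using choices unfolding alg_choices_def marked_0 by blast
next
  case (Suc r)
  then have "0 < length (C i)" by linarith
  then show ?case using Suc unfolding marked_Suc phase_def by (auto simp: Let_def)
qed

lemma phase_visits_singleton:
  assumes "i \<in> {1..s}" "cls n h i = {z}"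
  shows "phase_visits r i = [z]"
  using marked_less_length[OF assms(1), of r] assms singleton_class[OF assms]
  unfolding phase_visits_def phase_def by simp

text \<open>The marked point of a tour with at least two points, as an unbounded position on
  the tour (the marked position is this number modulo the tour length).\<close>
primrec tour_offset :: "nat \<Rightarrow> nat \<Rightarrow> nat" where
  "tour_offset i 0 = p0 i"
| "tour_offset i (Suc r) = tour_offset i r + phase_steps t D (C i) (tour_offset i r)"

context
  fixes i assumes i: "i \<in> {1..s}" "2 \<le> card (cls n h i)"
begin

lemma proper_cycle_class: "proper_cycle (C i)"
  using proper_class_tour[OF i] by blast

lemma marked_eq_tour_offset_mod: "marked r i = tour_offset i r mod length (C i)"
proof (induction r)
  case 0
  then show ?case using marked_less_length[OF i(1), of 0] i(2) marked_0 by fastforce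
next
  case (Suc r)
  have "marked (Suc r) i = (marked r i + phase_steps t D (C i) (marked r i)) mod length (C i)"
    using marked_Suc i phase_proper_cycle[OF proper_cycle_class] by auto
  then show ?case using Suc phase_steps_mod by (simp add: mod_add_left_eq)
qed

lemma phase_visits_tour:
  "phase_visits r i =
    map (\<lambda>j. C i ! ((tour_offset i r + j) mod length (C i))) [0..<phase_steps t D (C i) (tour_offset i r) + 1]"
  using i(2) phase_proper_cycle[OF proper_cycle_class] marked_eq_tour_offset_mod phase_steps_mod
  unfolding phase_visits_def by (auto simp: mod_add_left_eq)

lemma tour_offset_mono: "tour_offset i r \<le> tour_offset i (r + a)"
  by (induction a) (auto simp: le_trans)

lemma tour_offset_progress:
  "real a * D \<le> (\<Sum>j < tour_offset i (r + a) - tour_offset i r. cycle_step (C i) (tour_offset i r + j))"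
proof (induction a)
  case (Suc a)
  let ?o = "tour_offset i r" and ?u = "tour_offset i (r + a)"
  have "tour_offset i (r + Suc a) - ?o = (?u - ?o) + phase_steps t D (C i) ?u"
    using tour_offset_mono[of r a] by simp
  then have "(\<Sum>j < tour_offset i (r + Suc a) - ?o. cycle_step (C i) (?o + j))
     = (\<Sum>j < ?u - ?o. cycle_step (C i) (?o + j))
       + (\<Sum>j < phase_steps t D (C i) ?u. cycle_step (C i) (?o + (?u - ?o) + j))"
    by (simp only: sum_lessThan_add_shift)
  moreover have "?o + (?u - ?o) = ?u" using tour_offset_mono[of r a] by simp
  ultimately show ?case
    using Suc phase_steps_bounds(1)[OF proper_cycle_class, of ?u] by (simp add: algebra_simps)
qed simp

end

definition cover_rounds :: "nat list \<Rightarrow> nat" where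
  "cover_rounds c = nat \<lceil>cycle_length c / D\<rceil>"

lemma cover_rounds_bounds:
  assumes "proper_cycle c"
  shows "cycle_length c \<le> real (cover_rounds c) * D" "real (cover_rounds c) \<le> cycle_length c / D + 1"
proof -
  have "0 < cycle_length c / D" using cycle_length_pos[OF assms] Dmax_pos by simp
  then show "real (cover_rounds c) \<le> cycle_length c / D + 1"
    unfolding cover_rounds_def by linarith
  have "cycle_length c / D \<le> real (cover_rounds c)" unfolding cover_rounds_def by linarith
  then show "cycle_length c \<le> real (cover_rounds c) * D" using Dmax_pos by (simp add: field_simps)
qed

text \<open>Each phase walks at least \<open>D\<close> along the tour, so \<open>cover_rounds\<close> rounds traverse it completely.\<close>
lemma tour_offset_advance:
  assumes i: "i \<in> {1..s}" "2 \<le> card (cls n h i)"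
  shows "tour_offset i r + length (C i) \<le> tour_offset i (r + cover_rounds (C i))"
proof (rule ccontr)
  let ?c = "C i" and ?R = "cover_rounds (C i)"
  assume "\<not> ?thesis"
  moreover have "2 \<le> length ?c" using proper_cycle_class[OF i] unfolding proper_cycle_def by simp
  ultimately have "tour_offset i (r + ?R) - tour_offset i r < length ?c" by arith
  then have "(\<Sum>j < tour_offset i (r + ?R) - tour_offset i r. cycle_step ?c (tour_offset i r + j))
      < cycle_length ?c"
    by (rule cycle_steps_less_cycle_length[OF proper_cycle_class[OF i]])
  then show False
    using tour_offset_progress[OF i, of ?R r] cover_rounds_bounds(1)[OF proper_cycle_class[OF i]]
    by linarith
qed

lemma class_member_visited:
  assumes i: "i \<in> {1..s}" "2 \<le> card (cls n h i)" and z: "z \<in> cls n h i"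
  obtains r' where "r \<le> r'" "r' < r + cover_rounds (C i)" "z \<in> set (phase_visits r' i)"
proof -
  let ?c = "C i" and ?m = "length (C i)"
  have "proper_cycle ?c" "set ?c = cls n h i" using proper_class_tour[OF i] by blast+
  then have m: "0 < ?m" unfolding proper_cycle_def by linarith
  obtain q where q: "q < ?m" "?c ! q = z"
    using z \<open>set ?c = cls n h i\<close> by (metis in_set_conv_nth)
  define a where "a = tour_offset i r div ?m"
  define b where "b = tour_offset i r mod ?m"
  have "tour_offset i r = a * ?m + b" "b < ?m" using m unfolding a_def b_def by simp_all
  define u where "u = (if b \<le> q then q + a * ?m else q + (a + 1) * ?m)"
  have "u mod ?m = q"
    unfolding u_def using q(1) by (simp only: mod_mult_self1 split: if_split) simp
  moreover have "tour_offset i r \<le> u" "u < tour_offset i r + ?m"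
    using \<open>tour_offset i r = a * ?m + b\<close> \<open>b < ?m\<close> q(1) unfolding u_def by auto
  ultimately have u: "tour_offset i r \<le> u" "u < tour_offset i r + ?m" "u mod ?m = q" by blast+
  then have "u < tour_offset i (r + cover_rounds ?c)" using tour_offset_advance[OF i, of r] by linarith
  then obtain r' where r': "r \<le> r'" "r' < r + cover_rounds ?c" "tour_offset i r' \<le> u"
    "u < tour_offset i (Suc r')"
    using crossing_index[of r "r + cover_rounds ?c" "tour_offset i" u] u(1) by auto
  define j where "j = u - tour_offset i r'"
  then have "j < phase_steps t D ?c (tour_offset i r') + 1" "tour_offset i r' + j = u"
    using r' by simp_all
  then have "z \<in> set (phase_visits r' i)"
    unfolding phase_visits_tour[OF i] using u(3) q(2) by (auto simp del: upt_Suc)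
  then show ?thesis using that r' by blast
qed

end

definition list_travel_time :: "(nat \<Rightarrow> nat \<Rightarrow> real) \<Rightarrow> nat list \<Rightarrow> real" where
  "list_travel_time t l = (\<Sum>j < length l - 1. tt t (l ! j) (l ! (j + 1)))"

context continuous_bgt
begin

lemma walk_time_concat_le:
  assumes w: "\<forall>k. w k < n"
  shows "(\<forall>j<length (concat ls). w (a + j) = concat ls ! j) \<Longrightarrow>
    walk_time t w (a + length (concat ls)) - walk_time t w a
      \<le> (\<Sum>l\<leftarrow>ls. if l = [] then 0 else list_travel_time t l + D)"
proof (induction ls arbitrary: a)
  case (Cons l ls)
  let ?L = "length l"
  have "\<forall>j<length (concat ls). w (a + ?L + j) = concat ls ! j"
    using Cons.prems by (auto simp: nth_append add.assoc)
  note IH = Cons.IH[OF this]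
  show ?case
  proof (cases "l = []")
    case False
    then obtain L' where L': "?L = Suc L'" by (cases l) auto
    have l: "w (a + j) = l ! j" if "j < ?L" for j using Cons.prems that by (auto simp: nth_append)
    have "walk_time t w (a + ?L) - walk_time t w a
        = (\<Sum>j<L'. tt t (w (a + j)) (w (a + j + 1))) + tt t (w (a + L')) (w (a + L' + 1))"
      unfolding walk_time_add_diff L' by simp
    also have "(\<Sum>j<L'. tt t (w (a + j)) (w (a + j + 1))) = list_travel_time t l"
      unfolding list_travel_time_def L' using l[of "Suc _"] l L' by (intro sum.cong) auto
    also have "tt t (w (a + L')) (w (a + L' + 1)) \<le> D" using tt_le_Dmax w by blast
    finally show ?thesis using IH False by (simp add: add.assoc)
  qed (use IH in simp)
qed simp

end

context algorithm2
begin

lemma set_phase_visits: "i \<in> {1..s} \<Longrightarrow> set (phase_visits r i) \<subseteq> cls n h i"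
proof (cases "cls n h i = {}")
  case False
  assume i: "i \<in> {1..s}"
  show ?thesis
  proof (cases "2 \<le> card (cls n h i)")
    case True
    obtain E where "proper_cycle (C i)" "set (C i) = cls n h i" using proper_class_tour[OF i True] .
    then have "C i ! (k mod length (C i)) \<in> cls n h i" for k
      unfolding proper_cycle_def by (metis nth_mem mod_less_divisor not_numeral_le_zero not_gr_zero
          list.size(3))
    then show ?thesis unfolding phase_visits_tour[OF i True] by (auto simp del: upt_Suc)
  next
    case False
    then obtain z where "cls n h i = {z}"
      using card_cls_cases \<open>cls n h i \<noteq> {}\<close> card_1_singletonE by metis
    then show ?thesis using phase_visits_singleton[OF i] by simp
  qed
qed (simp add: phase_visits_def)

lemma set_phase_visits_subset_round: "i \<in> {1..s} \<Longrightarrow> set (phase_visits r i) \<subseteq> set (round_visits r)"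
  unfolding round_visits_eq by (auto simp: atLeastLessThanSuc_atLeastAtMost simp del: upt_Suc)

lemma round_visits_less: "x \<in> set (round_visits r) \<Longrightarrow> x < n"
  using set_phase_visits cls_subset unfolding round_visits_eq
  by (fastforce simp: atLeastLessThanSuc_atLeastAtMost simp del: upt_Suc)

lemma visit_of_singleton_class:
  assumes "x < n" "cls n h (class_of x) = {x}"
  shows "x \<in> set (round_visits r)"
  using phase_visits_singleton[OF class_of(1)[OF assms(1)] assms(2)]
    set_phase_visits_subset_round[OF class_of(1)[OF assms(1)]] by auto

lemma round_visits_two_points: "\<exists>x y. x \<in> set (round_visits r) \<and> y \<in> set (round_visits r) \<and> x \<noteq> y"
proof (cases "\<exists>i\<in>{1..s}. 2 \<le> card (cls n h i)")
  case True
  then obtain i where i: "i \<in> {1..s}" "2 \<le> card (cls n h i)" by blast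
  let ?c = "C i" and ?m = "length (C i)" and ?o = "tour_offset i r"
  have "1 \<le> phase_steps t D ?c ?o" using phase_steps_bounds(3)[OF proper_cycle_class[OF i]] .
  then have "?c ! ((?o + j) mod ?m) \<in> set (phase_visits r i)" if "j \<le> 1" for j
    unfolding phase_visits_tour[OF i] set_map using that by (intro rev_image_eqI[of j]) auto
  from this[of 0] this[of 1]
  have "?c ! (?o mod ?m) \<in> set (phase_visits r i)" "?c ! (Suc ?o mod ?m) \<in> set (phase_visits r i)"
    by simp_all
  moreover have "?c ! (?o mod ?m) \<noteq> ?c ! (Suc ?o mod ?m)"
    using proper_cycle_step(1)[OF proper_cycle_class[OF i]] .
  ultimately show ?thesis using set_phase_visits_subset_round[OF i(1)] by blast
next
  case False
  have "x \<in> set (round_visits r)" if x: "x < n" for x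
  proof -
    have "cls n h (class_of x) \<noteq> {}" using class_of[OF x] by blast
    then have "card (cls n h (class_of x)) = 1" using False card_cls_cases class_of(1)[OF x] by fastforce
    then have "cls n h (class_of x) = {x}" using class_of(2)[OF x] by (auto simp: card_1_singleton_iff)
    then show ?thesis by (rule visit_of_singleton_class[OF x])
  qed
  then show ?thesis using two_le_n by (intro exI[of _ 0] exI[of _ "n - 1"]) auto
qed

abbreviation W :: "nat \<Rightarrow> nat" where "W \<equiv> alg_walk n h t C p0"
abbreviation T :: "nat \<Rightarrow> real" where "T \<equiv> walk_time t W"
abbreviation round_offset :: "nat \<Rightarrow> nat" where
  "round_offset r \<equiv> flat_prefix (alg_round_list n h t C p0) r"

lemma round_offset_Suc: "round_offset (Suc r) = round_offset r + length (round_visits r)"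
  unfolding flat_prefix_def by simp

lemma round_offset_mono: "r \<le> r' \<Longrightarrow> round_offset r \<le> round_offset r'"
  unfolding flat_prefix_def by (rule sum_mono2) auto

lemma round_offset_ge: "r \<le> round_offset r"
proof (induction r)
  case (Suc r)
  have "round_visits r \<noteq> []" using round_visits_two_points[of r] by auto
  then show ?case using round_offset_Suc[of r] Suc by (cases "round_visits r") auto
qed (simp add: flat_prefix_def)

lemma alg_walk_round: "j < length (round_visits r) \<Longrightarrow> W (1 + round_offset r + j) = round_visits r ! j"
proof -
  assume j: "j < length (round_visits r)"
  have "(LEAST r'. round_offset r + j < round_offset (Suc r')) = r"
  proof (rule Least_equality)
    show "round_offset r + j < round_offset (Suc r)" using j round_offset_Suc by simp
    show "r \<le> r'" if "round_offset r + j < round_offset (Suc r')" for r'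
    proof (rule ccontr)
      assume "\<not> r \<le> r'"
      then show False using that round_offset_mono[of "Suc r'" r] by simp
    qed
  qed
  then show ?thesis unfolding alg_walk_def flat_def by simp
qed

lemma alg_walk_less: "W k < n"
proof (cases "k = 0")
  case False
  have "k - 1 < round_offset (Suc (k - 1))" using round_offset_ge[of "Suc (k - 1)"] by simp
  then obtain r where r: "round_offset r \<le> k - 1" "k - 1 < round_offset (Suc r)"
    using crossing_index[of 0 "Suc (k - 1)" round_offset "k - 1"] by (auto simp: flat_prefix_def)
  define j where "j = k - 1 - round_offset r"
  have j: "j < length (round_visits r)" "k = 1 + round_offset r + j"
    using r round_offset_Suc False unfolding j_def by auto
  then show ?thesis using alg_walk_round[OF j(1)] round_visits_less[OF nth_mem[OF j(1)]] by simp
qed (use two_le_n in \<open>simp add: alg_walk_def\<close>)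

lemma alg_walk_in_range: "\<forall>k. W k < n"
  using alg_walk_less by blast

definition round_start :: "nat \<Rightarrow> real" where
  "round_start r = T (1 + round_offset r)"

lemma round_start_0: "round_start 0 \<le> D"
  using tt_le_Dmax[OF alg_walk_less alg_walk_less]
  unfolding round_start_def flat_prefix_def walk_time_def by simp

lemma visit_time_in_round:
  "j < length (round_visits r) \<Longrightarrow>
    round_start r \<le> T (1 + round_offset r + j) \<and> T (1 + round_offset r + j) \<le> round_start (Suc r)"
  unfolding round_start_def using walk_time_mono[OF bgt alg_walk_in_range] round_offset_Suc by simp

lemma list_travel_time_phase_visits: "i \<in> {1..s} \<Longrightarrow> list_travel_time t (phase_visits r i) \<le> 2 * D"
proof (cases "2 \<le> card (cls n h i)")
  case True
  assume i: "i \<in> {1..s}"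
  let ?c = "C i" and ?o = "tour_offset i r"
  note proper = proper_cycle_class[OF i True]
  have "list_travel_time t (phase_visits r i) = (\<Sum>j<phase_steps t D ?c ?o. cycle_step ?c (?o + j))"
    unfolding list_travel_time_def phase_visits_tour[OF i True]
    using cycle_step_eq_tt[OF proper] by (intro sum.cong) (simp_all del: upt_Suc)
  also have "\<dots> < 2 * D" using phase_steps_bounds(2)[OF proper] .
  finally show ?thesis by simp
next
  case False
  assume i: "i \<in> {1..s}"
  show ?thesis
  proof (cases "cls n h i = {}")
    case False
    then obtain z where "cls n h i = {z}"
      using card_cls_cases \<open>\<not> 2 \<le> card (cls n h i)\<close> card_1_singletonE by metis
    then show ?thesis using phase_visits_singleton[OF i] Dmax_pos by (simp add: list_travel_time_def)
  qed (use Dmax_pos in \<open>simp add: phase_visits_def list_travel_time_def\<close>)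
qed

lemma round_duration_le: "round_start (Suc r) - round_start r \<le> 3 * D * real s"
proof -
  have "round_start (Suc r) - round_start r
      = T (1 + round_offset r + length (concat (map (phase_visits r) [1..<s+1]))) - T (1 + round_offset r)"
    unfolding round_start_def round_offset_Suc round_visits_eq by (simp add: add.assoc)
  also have "\<dots> \<le> (\<Sum>l\<leftarrow>map (phase_visits r) [1..<s+1]. if l = [] then 0 else list_travel_time t l + D)"
    using alg_walk_round round_visits_eq by (intro walk_time_concat_le[OF alg_walk_in_range]) simp
  also have "\<dots> \<le> (\<Sum>i\<leftarrow>[1..<s+1]. 3 * D)"
    unfolding map_map comp_def using list_travel_time_phase_visits Dmax_pos
    by (intro sum_list_mono) (auto simp del: upt_Suc)
  also have "\<dots> = 3 * D * real s" by (simp add: sum_list_triv del: upt_Suc)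
  finally show ?thesis .
qed

lemma round_duration_ge: "min_travel_time \<le> round_start (Suc r) - round_start r"
proof -
  let ?k = "\<lambda>j. 1 + round_offset r + j"
  obtain x y where xy: "x \<in> set (round_visits r)" "y \<in> set (round_visits r)" "x \<noteq> y"
    using round_visits_two_points by blast
  then obtain jx jy where j: "jx < length (round_visits r)" "round_visits r ! jx = x"
    "jy < length (round_visits r)" "round_visits r ! jy = y"
    by (metis in_set_conv_nth)
  define a b where "a = min jx jy" and "b = max jx jy"
  have ab: "a \<le> b" "b < length (round_visits r)" "W (?k a) \<noteq> W (?k b)"
    using j xy alg_walk_round unfolding a_def b_def by (cases "jx \<le> jy"; simp)+
  have "min_travel_time \<le> tt t (W (?k a)) (W (?k b))"
    using min_travel_time_le[OF alg_walk_less alg_walk_less ab(3)] ab(3) unfolding tt_def by simp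
  also have "\<dots> \<le> T (?k b) - T (?k a)"
    using tt_le_walk_time_diff[OF bgt alg_walk_in_range] ab(1) by simp
  also have "\<dots> \<le> round_start (Suc r) - round_start r"
    using visit_time_in_round[of a r] visit_time_in_round[of b r] ab(1,2) by simp
  finally show ?thesis .
qed

lemma round_start_mono: "a \<le> b \<Longrightarrow> round_start a \<le> round_start b"
proof (induction b)
  case (Suc b)
  then show ?case
    using round_duration_ge[of b] min_travel_time_pos by (cases "a = Suc b") (auto simp: le_Suc_eq)
qed simp

lemma round_start_diff_le: "a \<le> b \<Longrightarrow> round_start b - round_start a \<le> real (b - a) * (3 * D * real s)"
proof (induction b)
  case (Suc b)
  show ?case
  proof (cases "a = Suc b")
    case False
    then have "a \<le> b" using Suc by simp
    then show ?thesis using Suc.IH round_duration_le[of b] by (simp add: Suc_diff_le algebra_simps)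
  qed simp
qed simp

lemma round_start_ge: "real r * min_travel_time \<le> round_start r"
proof (induction r)
  case 0
  then show ?case using walk_time_nonneg[OF bgt alg_walk_in_range] by (simp add: round_start_def)
next
  case (Suc r)
  then show ?case using round_duration_ge[of r] by (simp add: algebra_simps)
qed

end

context algorithm2
begin

lemma round_containing:
  assumes "round_start R \<le> \<tau>"
  obtains r where "R \<le> r" "round_start r \<le> \<tau>" "\<tau> < round_start (Suc r)"
proof -
  define b where "b = nat \<lceil>\<tau> / min_travel_time\<rceil> + 1"
  have "\<tau> / min_travel_time < real b" unfolding b_def by linarith
  then have "\<tau> < round_start b"
    using round_start_ge[of b] min_travel_time_pos by (simp add: field_simps)
  moreover have "R \<le> b" using round_start_mono[of b R] assms calculation by linarith
  ultimately show ?thesis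
    using that assms crossing_index[of R b round_start \<tau>] by auto
qed

text \<open>Once \<open>\<tau>\<close> lies in round \<open>r \<ge> R\<close>, the point \<open>z\<close> was visited during one of the \<open>R\<close>
  rounds before \<open>r\<close>, and \<open>R + 1\<close> rounds last at most \<open>(R + 1) 3 D s\<close>.\<close>
lemma time_since_cut_le:
  assumes visits: "\<And>r. \<exists>r'. r \<le> r' \<and> r' < r + R \<and> z \<in> set (round_visits r')"
    and \<tau>: "0 \<le> \<tau>"
  shows "\<tau> - last_cut W T z \<tau> \<le> D + 3 * D * real s * (real R + 1)"
proof (cases "\<tau> < round_start R")
  case True
  then have "\<tau> \<le> D + real R * (3 * D * real s)"
    using round_start_diff_le[of 0 R] round_start_0 by simp
  moreover have "0 \<le> 3 * D * real s" using Dmax_pos by simp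
  ultimately show ?thesis using last_cut_nonneg[of W T z \<tau>] by (simp add: algebra_simps)
next
  case False
  then have "round_start R \<le> \<tau>" by simp
  then obtain r where r: "R \<le> r" "round_start r \<le> \<tau>" "\<tau> < round_start (Suc r)"
    by (rule round_containing)
  obtain r' where r': "r - R \<le> r'" "r' < r" "z \<in> set (round_visits r')"
    using visits[of "r - R"] r(1) by auto
  then obtain j where j: "j < length (round_visits r')" "round_visits r' ! j = z"
    by (metis in_set_conv_nth)
  let ?v = "T (1 + round_offset r' + j)"
  have "round_start r' \<le> ?v" "?v \<le> round_start (Suc r')" using visit_time_in_round[OF j(1)] by auto
  moreover have "round_start (Suc r') \<le> \<tau>" using round_start_mono[of "Suc r'" r] r'(2) r(2) by simp
  ultimately have "round_start r' \<le> last_cut W T z \<tau>"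
    using le_last_cut[of W "1 + round_offset r' + j" z T \<tau>] alg_walk_round[OF j(1)] j(2) by simp
  moreover have "round_start (Suc r) - round_start r' \<le> real (Suc r - r') * (3 * D * real s)"
    using round_start_diff_le[of r' "Suc r"] r'(2) by simp
  moreover have "real (Suc r - r') \<le> real R + 1" using r'(1,2) r(1) by simp
  then have "real (Suc r - r') * (3 * D * real s) \<le> (real R + 1) * (3 * D * real s)"
    using Dmax_pos by (intro mult_right_mono) auto
  ultimately show ?thesis using r(3) Dmax_pos by (simp add: algebra_simps)
qed

lemma height_bound_singleton_class:
  assumes z: "z < n" "cls n h (class_of z) = {z}" and \<tau>: "0 \<le> \<tau>"
  shows "height h W T z \<tau> \<le> 14 * real s * (h z * D / 2)"
proof -
  have "\<tau> - last_cut W T z \<tau> \<le> D + 3 * D * real s * (real 1 + 1)"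
    using visit_of_singleton_class[OF z] by (intro time_since_cut_le[OF _ \<tau>]) auto
  also have "\<dots> \<le> 7 * real s * D" using num_classes_ge_1 Dmax_pos by (simp add: algebra_simps)
  finally have "height h W T z \<tau> \<le> h z * (7 * real s * D)"
    by (rule height_le_if_last_cut_ge[of h z \<tau> W T, OF bgt_instanceD(1)[OF bgt z(1)]])
  then show ?thesis by (simp add: algebra_simps)
qed

lemma height_bound_proper_class:
  assumes z: "z < n" and card: "2 \<le> card (cls n h (class_of z))"
  obtains E where "min_spanning_tree t (cls n h (class_of z)) E"
    "\<And>\<tau>. 0 \<le> \<tau> \<Longrightarrow> height h W T z \<tau> \<le> h z * (7 * real s * D + 6 * real s * tree_weight t E)"
proof -
  let ?i = "class_of z"
  note i = class_of(1)[OF z] card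
  obtain E where E: "min_spanning_tree t (cls n h ?i) E" "euler_tour E (C ?i)" "proper_cycle (C ?i)"
    using proper_class_tour[OF i] by blast
  then have "spanning_tree (cls n h ?i) E" unfolding min_spanning_tree_def by blast
  then have length: "cycle_length (C ?i) = 2 * tree_weight t E"
    using cycle_length_euler_tour[OF _ E(2) cls_subset] by blast
  define R where "R = cover_rounds (C ?i)"
  have "real R * D \<le> (cycle_length (C ?i) / D + 1) * D"
    using cover_rounds_bounds(2)[OF E(3)] Dmax_pos unfolding R_def by (intro mult_right_mono) auto
  also have "\<dots> = 2 * tree_weight t E + D" using length Dmax_pos by (simp add: field_simps)
  finally have RD: "real R * D \<le> 2 * tree_weight t E + D" .
  have visits: "\<exists>r'. r \<le> r' \<and> r' < r + R \<and> z \<in> set (round_visits r')" for r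
    using class_member_visited[OF i class_of(2)[OF z]] set_phase_visits_subset_round[OF i(1)]
    unfolding R_def by (metis subsetD)
  show ?thesis
  proof (rule that[OF E(1)])
    fix \<tau> :: real assume "0 \<le> \<tau>"
    have "\<tau> - last_cut W T z \<tau> \<le> D + 3 * D * real s * (real R + 1)"
      using visits \<open>0 \<le> \<tau>\<close> unfolding R_def
      by (intro time_since_cut_le) auto
    also have "\<dots> = D + 3 * real s * (real R * D) + 3 * real s * D" by (simp add: algebra_simps)
    also have "\<dots> \<le> D + 3 * real s * (2 * tree_weight t E + D) + 3 * real s * D"
      using RD num_classes_ge_1 by simp
    also have "\<dots> \<le> 7 * real s * D + 6 * real s * tree_weight t E"
      using num_classes_ge_1 Dmax_pos by (simp add: algebra_simps)
    finally show "height h W T z \<tau> \<le> h z * (7 * real s * D + 6 * real s * tree_weight t E)"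
      by (rule height_le_if_last_cut_ge[of h z \<tau> W T, OF bgt_instanceD(1)[OF bgt z]])
  qed
qed

lemma h_less_double_class_threshold: "x \<in> cls n h i \<Longrightarrow> 1 \<le> i \<Longrightarrow> h x < 2 * (2 ^ (i - 1) * hmin n h)"
  using cls_bounds[of x i] by (cases i) (auto simp: mult.assoc)

lemma OPT_ge_class_tree_weight:
  assumes "cls n h i \<noteq> {}" "min_spanning_tree t (cls n h i) E"
  shows "ereal (2 ^ (i - 1) * hmin n h * tree_weight t E / 2) \<le> OPT n h t"
  using OPT_ge_mst_weight[OF cls_subset assms] hmin_pos cls_bounds by auto

lemma height_le_OPT_multiple:
  assumes z: "z < n"
  obtains X where "ereal X \<le> OPT n h t" "0 \<le> X" "\<And>\<tau>. 0 \<le> \<tau> \<Longrightarrow> height h W T z \<tau> \<le> 38 * real s * X"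
proof -
  let ?i = "class_of z"
  define X1 where "X1 = h z * D / 2"
  have X1: "ereal X1 \<le> OPT n h t" "0 \<le> X1"
    unfolding X1_def using OPT_ge_half_Dmax[OF z] bgt_instanceD(1)[OF bgt z] Dmax_pos by auto
  have "cls n h ?i \<noteq> {}" using class_of(2)[OF z] by blast
  then consider "card (cls n h ?i) = 1" | "2 \<le> card (cls n h ?i)" using card_cls_cases by blast
  then show ?thesis
  proof cases
    case 1
    then have "cls n h ?i = {z}" using class_of(2)[OF z] by (auto simp: card_1_singleton_iff)
    have "14 * real s * X1 \<le> 38 * real s * X1" using num_classes_ge_1 X1(2) by (intro mult_right_mono) auto
    then show ?thesis
      using that[OF X1] height_bound_singleton_class[OF z \<open>cls n h ?i = {z}\<close>]
      unfolding X1_def by (meson order_trans)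
  next
    case 2
    obtain E where E: "min_spanning_tree t (cls n h ?i) E"
      "\<And>\<tau>. 0 \<le> \<tau> \<Longrightarrow> height h W T z \<tau> \<le> h z * (7 * real s * D + 6 * real s * tree_weight t E)"
      using height_bound_proper_class[OF z 2] by blast
    define X2 where "X2 = 2 ^ (?i - 1) * hmin n h * tree_weight t E / 2"
    have "0 \<le> tree_weight t E"
      using E(1) cls_subset unfolding min_spanning_tree_def by (blast intro: tree_weight_nonneg)
    then have "h z * tree_weight t E \<le> 2 * (2 ^ (?i - 1) * hmin n h) * tree_weight t E"
      using h_less_double_class_threshold[OF class_of(2)[OF z]] class_of(1)[OF z]
      by (intro mult_right_mono) auto
    then have "h z * tree_weight t E \<le> 4 * X2" unfolding X2_def by (simp add: ac_simps)
    have bound: "height h W T z \<tau> \<le> 14 * real s * X1 + 24 * real s * X2" if "0 \<le> \<tau>" for \<tau>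
    proof -
      have "6 * real s * (h z * tree_weight t E) \<le> 6 * real s * (4 * X2)"
        using \<open>h z * tree_weight t E \<le> 4 * X2\<close> num_classes_ge_1 by (intro mult_left_mono) auto
      then show ?thesis using E(2)[OF that] unfolding X1_def by (simp add: algebra_simps)
    qed
    have "14 * real s * X1 \<le> 14 * real s * max X1 X2" "24 * real s * X2 \<le> 24 * real s * max X1 X2"
      using num_classes_ge_1 by (intro mult_left_mono; simp)+
    then have "14 * real s * X1 + 24 * real s * X2 \<le> 38 * real s * max X1 X2" by linarith
    moreover have "ereal (max X1 X2) \<le> OPT n h t"
      using X1 OPT_ge_class_tree_weight[OF \<open>cls n h ?i \<noteq> {}\<close> E(1)] by (simp add: X2_def max_def)
    ultimately show ?thesis using that[of "max X1 X2"] bound X1(2) by (meson max.coboundedI1 order_trans)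
  qed
qed

lemma num_classes_le_log: "real s \<le> 2 * log 2 (of_int \<lceil>hmax n h / hmin n h\<rceil>)"
proof -
  define q where "q = hmax n h / hmin n h"
  have q1: "1 < q" unfolding q_def using hmin_less_hmax hmin_pos by simp
  then have "2 \<le> \<lceil>q\<rceil>" by (simp add: less_ceiling_iff)
  then have "1 \<le> log 2 (of_int \<lceil>q\<rceil>)" by simp
  moreover have "log 2 q \<le> log 2 (of_int \<lceil>q\<rceil>)" using q1 by simp
  moreover have "real (nat \<lfloor>log 2 q\<rfloor>) \<le> log 2 q" using q1 by simp
  ultimately show ?thesis unfolding num_classes_def q_def[symmetric] by simp
qed

lemma MH_alg_walk_le: "MH n h W T \<le> ereal (76 * log 2 (of_int \<lceil>hmax n h / hmin n h\<rceil>)) * OPT n h t"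
proof (rule MH_le)
  fix z \<tau> assume z: "z < n" and \<tau>: "(0::real) \<le> \<tau>"
  obtain X where X: "ereal X \<le> OPT n h t" "0 \<le> X" "height h W T z \<tau> \<le> 38 * real s * X"
    using height_le_OPT_multiple[OF z] \<tau> by metis
  have "ereal (height h W T z \<tau>) \<le> ereal (38 * real s) * ereal X" using X(3) by simp
  also have "\<dots> \<le> ereal (38 * real s) * OPT n h t"
    using X(1) num_classes_ge_1 by (intro ereal_mult_left_mono) auto
  also have "\<dots> \<le> ereal (76 * log 2 (of_int \<lceil>hmax n h / hmin n h\<rceil>)) * OPT n h t"
  proof (rule ereal_mult_right_mono)
    show "0 \<le> OPT n h t" using X(1,2) by (metis ereal_less_eq(5) order_trans)
  qed (use num_classes_le_log in simp)
  finally show "ereal (height h W T z \<tau>) \<le> ereal (76 * log 2 (of_int \<lceil>hmax n h / hmin n h\<rceil>)) * OPT n h t" .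
qed

end

theorem theorem5:
  "\<exists>c::real. c > 0 \<and>
     (\<forall>n h t C p0.
        n \<ge> 2 \<longrightarrow> bgt_instance n h t \<longrightarrow> hmax n h > hmin n h \<longrightarrow>
        alg_choices n h t C p0 \<longrightarrow>
        MH n h (alg_walk n h t C p0) (walk_time t (alg_walk n h t C p0))
          \<le> ereal (c * log 2 (of_int \<lceil>hmax n h / hmin n h\<rceil>)) * OPT n h t)"
proof (intro exI[of _ 76] conjI allI impI)
  fix n h t C p0
  assume "n \<ge> 2" "bgt_instance n h t" "hmax n h > hmin n h" "alg_choices n h t C p0"
  then interpret algorithm2 n h t C p0 by unfold_locales
  show "MH n h (alg_walk n h t C p0) (walk_time t (alg_walk n h t C p0))
      \<le> ereal (76 * log 2 (of_int \<lceil>hmax n h / hmin n h\<rceil>)) * OPT n h t"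
    by (rule MH_alg_walk_le)
qed simp

end
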